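(* Let $Y=W_1\times W_2$ with coordinates $(a,b,x,y)$, $T=ab$, and $$\Phi=\begin{pmatrix}1-T & a^4\\ -b^4 & 1+T+T^2+T^3\end{pmatrix},\qquad \varphi(a,b,x,y)=\Big(a,b,\Phi\tbinom{x}{y}\Big).$$ Then $\mu=\varphi\circ\mu_0$ is a real circle form on $Y$, and it is equivalent to the linear real circle form $\mu_0$.
   Context: For $k\ge1$, $W_k=\mathbb{C}^2$ is the $\mathbb{C}^*$-module with weights $(k,-k)$: $t\cdot(x,y)=(t^kx,t^{-k}y)$. Thus on $Y=W_1\times W_2$, $t\cdot(a,b,x,y)=(ta,t^{-1}b,t^2x,t^{-2}y)$. Let $\sigma(t)=\overline{t}^{-1}$ on $\mathbb{C}^*$. A real circle form on $Y$ is an antiholomorphic involution $\mu$ of $Y$ with $\mu(t\cdot p)=\sigma(t)\cdot\mu(p)$ for all $t\in\mathbb{C}^*$, $p\in Y$; two such forms $\mu_1,\mu_2$ are equivalent if $\mu_2=\psi\circ\mu_1\circ\psi^{-1}$ for some regular $\mathbb{C}^*$-equivariant automorphism $\psi$ of $Y$. Here $\mu_0(a,b,x,y)=(\overline{b},\overline{a},\overline{y},\overline{x})$. *)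

theory Defs
  imports "HOL-Analysis.Analysis"
begin

type_synonym Y = "complex \<times> complex \<times> complex \<times> complex"

definition act :: "complex \<Rightarrow> Y \<Rightarrow> Y" where
  "act t p = (case p of (a,b,x,y) \<Rightarrow> (t*a, inverse t * b, t^2 * x, inverse (t^2) * y))"

definition sigma :: "complex \<Rightarrow> complex" where
  "sigma t = inverse (cnj t)"

definition cscale :: "complex \<Rightarrow> Y \<Rightarrow> Y" where
  "cscale c p = (case p of (a,b,x,y) \<Rightarrow> (c*a, c*b, c*x, c*y))"

definition antiholomorphic :: "(Y \<Rightarrow> Y) \<Rightarrow> bool" where
  "antiholomorphic f \<longleftrightarrow> (\<forall>p. \<exists>D. (f has_derivative D) (at p) \<and>
       (\<forall>c v. D (cscale c v) = cscale (cnj c) (D v)))"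

definition real_circle_form :: "(Y \<Rightarrow> Y) \<Rightarrow> bool" where
  "real_circle_form mu \<longleftrightarrow> antiholomorphic mu \<and> (\<forall>p. mu (mu p) = p) \<and>
     (\<forall>t p. t \<noteq> 0 \<longrightarrow> mu (act t p) = act (sigma t) (mu p))"

inductive poly_fun :: "(Y \<Rightarrow> complex) \<Rightarrow> bool" where
  const: "poly_fun (\<lambda>p. c)"
| proj1: "poly_fun (\<lambda>(a,b,x,y). a)"
| proj2: "poly_fun (\<lambda>(a,b,x,y). b)"
| proj3: "poly_fun (\<lambda>(a,b,x,y). x)"
| proj4: "poly_fun (\<lambda>(a,b,x,y). y)"
| add: "poly_fun f \<Longrightarrow> poly_fun g \<Longrightarrow> poly_fun (\<lambda>p. f p + g p)"
| mult: "poly_fun f \<Longrightarrow> poly_fun g \<Longrightarrow> poly_fun (\<lambda>p. f p * g p)"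

definition poly_map :: "(Y \<Rightarrow> Y) \<Rightarrow> bool" where
  "poly_map f \<longleftrightarrow> poly_fun (\<lambda>p. fst (f p)) \<and> poly_fun (\<lambda>p. fst (snd (f p))) \<and>
     poly_fun (\<lambda>p. fst (snd (snd (f p)))) \<and> poly_fun (\<lambda>p. snd (snd (snd (f p))))"

definition regular_aut :: "(Y \<Rightarrow> Y) \<Rightarrow> bool" where
  "regular_aut f \<longleftrightarrow> bij f \<and> poly_map f \<and> poly_map (inv f)"

definition equivariant :: "(Y \<Rightarrow> Y) \<Rightarrow> bool" where
  "equivariant f \<longleftrightarrow> (\<forall>t p. t \<noteq> 0 \<longrightarrow> f (act t p) = act t (f p))"

definition equivalent_forms :: "(Y \<Rightarrow> Y) \<Rightarrow> (Y \<Rightarrow> Y) \<Rightarrow> bool" where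
  "equivalent_forms mu1 mu2 \<longleftrightarrow>
     (\<exists>psi. regular_aut psi \<and> equivariant psi \<and> mu2 = psi \<circ> mu1 \<circ> inv psi)"

definition mu0 :: "Y \<Rightarrow> Y" where
  "mu0 p = (case p of (a,b,x,y) \<Rightarrow> (cnj b, cnj a, cnj y, cnj x))"

definition phi :: "Y \<Rightarrow> Y" where
  "phi p = (case p of (a,b,x,y) \<Rightarrow> (let T = a*b in
     (a, b, (1 - T) * x + a^4 * y, - (b^4) * x + (1 + T + T^2 + T^3) * y)))"

end

theory Submission
  imports Defs "HOL-Computational_Algebra.Polynomial"
begin

(* Conjugating by a polynomial equivariant automorphism preserves antiholomorphy, involutivity
   and sigma-equivariance, and mu0 is a real circle form, so it suffices to find psi with
   phi o mu0 = psi o mu0 o psi^-1.  We look for psi among the maps (a,b,v) |-> (a,b,Psi v) with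
   Psi = [[P(T), a^4 Q(T)], [b^4 R(T), S(T)]], T = ab, det Psi = 1: these are regular
   equivariant automorphisms, composition multiplies the matrices, and mu0 conjugates Psi into
   [[conj S, a^4 conj R], [b^4 conj Q, conj P]].  The condition phi o (mu0 o psi o mu0) = psi
   thus becomes four polynomial identities in T, solved by an explicit Psi of degree 3. *)

definition holomorphic_map :: "(Y \<Rightarrow> Y) \<Rightarrow> bool" where
  "holomorphic_map f \<longleftrightarrow> (\<forall>p. \<exists>D. (f has_derivative D) (at p) \<and>
       (\<forall>c v. D (cscale c v) = cscale c (D v)))"

lemma poly_fun_has_complex_derivative:
  assumes "poly_fun f"
  shows "\<exists>D. (f has_derivative D) (at p) \<and> (\<forall>c v. D (cscale c v) = c * D v)"
  using assms
proof induction
  case (add f g)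
  then obtain Df Dg where "(f has_derivative Df) (at p)" "(g has_derivative Dg) (at p)"
    "\<forall>c v. Df (cscale c v) = c * Df v" "\<forall>c v. Dg (cscale c v) = c * Dg v" by blast
  then show ?case
    by (intro exI[of _ "\<lambda>v. Df v + Dg v"]) (auto intro: has_derivative_add simp: algebra_simps)
next
  case (mult f g)
  then obtain Df Dg where Df: "(f has_derivative Df) (at p)" "\<forall>c v. Df (cscale c v) = c * Df v"
    and Dg: "(g has_derivative Dg) (at p)" "\<forall>c v. Dg (cscale c v) = c * Dg v" by blast
  show ?case
    using has_derivative_mult[OF Df(1) Dg(1)] Df(2) Dg(2) by (auto simp: algebra_simps)
qed (auto intro!: exI derivative_eq_intros simp: split_def cscale_def)

lemma holomorphic_map_poly_map:
  assumes "poly_map f"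
  shows "holomorphic_map f"
  unfolding holomorphic_map_def
proof
  fix p :: Y
  from assms obtain D1 D2 D3 D4 where
    D1: "((\<lambda>p. fst (f p)) has_derivative D1) (at p)" "\<forall>c v. D1 (cscale c v) = c * D1 v" and
    D2: "((\<lambda>p. fst (snd (f p))) has_derivative D2) (at p)" "\<forall>c v. D2 (cscale c v) = c * D2 v" and
    D3: "((\<lambda>p. fst (snd (snd (f p)))) has_derivative D3) (at p)" "\<forall>c v. D3 (cscale c v) = c * D3 v" and
    D4: "((\<lambda>p. snd (snd (snd (f p)))) has_derivative D4) (at p)" "\<forall>c v. D4 (cscale c v) = c * D4 v"
    unfolding poly_map_def by (metis poly_fun_has_complex_derivative)
  have "(f has_derivative (\<lambda>v. (D1 v, D2 v, D3 v, D4 v))) (at p)"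
    using has_derivative_Pair[OF D1(1)
            has_derivative_Pair[OF D2(1) has_derivative_Pair[OF D3(1) D4(1)]]]
    by simp
  moreover have "\<forall>c v. (D1 (cscale c v), D2 (cscale c v), D3 (cscale c v), D4 (cscale c v))
      = cscale c (D1 v, D2 v, D3 v, D4 v)"
    using D1(2) D2(2) D3(2) D4(2) by (simp add: cscale_def)
  ultimately show "\<exists>D. (f has_derivative D) (at p) \<and> (\<forall>c v. D (cscale c v) = cscale c (D v))"
    by blast
qed

lemma antiholomorphic_holomorphic_comp:
  assumes "holomorphic_map f" "antiholomorphic g"
  shows "antiholomorphic (f \<circ> g)"
  unfolding antiholomorphic_def
proof
  fix p :: Y
  obtain Dg where Dg: "(g has_derivative Dg) (at p)" "\<forall>c v. Dg (cscale c v) = cscale (cnj c) (Dg v)"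
    using assms(2) unfolding antiholomorphic_def by blast
  obtain Df where Df: "(f has_derivative Df) (at (g p))" "\<forall>c v. Df (cscale c v) = cscale c (Df v)"
    using assms(1) unfolding holomorphic_map_def by blast
  show "\<exists>D. (f \<circ> g has_derivative D) (at p) \<and> (\<forall>c v. D (cscale c v) = cscale (cnj c) (D v))"
  proof (intro exI conjI allI)
    show "(f \<circ> g has_derivative Df \<circ> Dg) (at p)" using diff_chain_at[OF Dg(1) Df(1)] .
    show "(Df \<circ> Dg) (cscale c v) = cscale (cnj c) ((Df \<circ> Dg) v)" for c v
      using Df(2) Dg(2) by (metis comp_apply)
  qed
qed

lemma antiholomorphic_comp_holomorphic:
  assumes "antiholomorphic g" "holomorphic_map f"
  shows "antiholomorphic (g \<circ> f)"
  unfolding antiholomorphic_def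
proof
  fix p :: Y
  obtain Df where Df: "(f has_derivative Df) (at p)" "\<forall>c v. Df (cscale c v) = cscale c (Df v)"
    using assms(2) unfolding holomorphic_map_def by blast
  obtain Dg where Dg: "(g has_derivative Dg) (at (f p))" "\<forall>c v. Dg (cscale c v) = cscale (cnj c) (Dg v)"
    using assms(1) unfolding antiholomorphic_def by blast
  show "\<exists>D. (g \<circ> f has_derivative D) (at p) \<and> (\<forall>c v. D (cscale c v) = cscale (cnj c) (D v))"
  proof (intro exI conjI allI)
    show "(g \<circ> f has_derivative Dg \<circ> Df) (at p)" using diff_chain_at[OF Df(1) Dg(1)] .
    show "(Dg \<circ> Df) (cscale c v) = cscale (cnj c) ((Dg \<circ> Df) v)" for c v
      using Df(2) Dg(2) by (metis comp_apply)
  qed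
qed

lemma equivariant_inv:
  assumes "bij f" "equivariant f"
  shows "equivariant (inv f)"
  unfolding equivariant_def
proof (intro allI impI)
  fix t p assume "t \<noteq> (0::complex)"
  then have "f (act t (inv f p)) = act t (f (inv f p))"
    using assms(2) unfolding equivariant_def by blast
  then have "f (act t (inv f p)) = f (inv f (act t p))"
    using bij_is_surj[OF assms(1)] by (simp add: surj_f_inv_f)
  then show "inv f (act t p) = act t (inv f p)"
    using bij_is_inj[OF assms(1)] by (simp add: inj_eq)
qed

lemma real_circle_form_equivalent:
  assumes "real_circle_form mu1" "equivalent_forms mu1 mu2"
  shows "real_circle_form mu2"
proof -
  obtain psi where psi: "regular_aut psi" "equivariant psi" and mu2: "mu2 = psi \<circ> mu1 \<circ> inv psi"
    using assms(2) unfolding equivalent_forms_def by blast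
  have anti: "antiholomorphic mu1" and invol: "\<And>p. mu1 (mu1 p) = p"
    and equiv: "\<And>t p. t \<noteq> 0 \<Longrightarrow> mu1 (act t p) = act (sigma t) (mu1 p)"
    using assms(1) unfolding real_circle_form_def by blast+
  have bij: "bij psi" and "poly_map psi" "poly_map (inv psi)"
    using psi(1) unfolding regular_aut_def by auto
  then have "holomorphic_map psi" "holomorphic_map (inv psi)"
    by (simp_all add: holomorphic_map_poly_map)
  then have "antiholomorphic mu2"
    unfolding mu2
    by (metis anti antiholomorphic_comp_holomorphic antiholomorphic_holomorphic_comp comp_assoc)
  moreover have "mu2 (mu2 p) = p" for p
    using bij by (simp add: mu2 invol bij_is_inj bij_is_surj surj_f_inv_f)
  moreover have "mu2 (act t p) = act (sigma t) (mu2 p)" if "t \<noteq> 0" for t p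
  proof -
    have "sigma t \<noteq> 0" using that by (simp add: sigma_def)
    then show ?thesis
      using that equiv psi(2) equivariant_inv[OF bij psi(2)]
      by (simp add: mu2 equivariant_def del: split_paired_All)
  qed
  ultimately show ?thesis unfolding real_circle_form_def by blast
qed

lemma mu0_mu0: "mu0 \<circ> mu0 = id"
  by (auto simp: fun_eq_iff mu0_def)

lemma real_circle_form_mu0: "real_circle_form mu0"
proof -
  have mu0_eq: "mu0 = (\<lambda>p. (cnj (fst (snd p)), cnj (fst p), cnj (snd (snd (snd p))), cnj (fst (snd (snd p)))))"
    by (auto simp: mu0_def split: prod.splits)
  have "(mu0 has_derivative mu0) (at p)" for p
    unfolding mu0_eq by (auto intro!: derivative_eq_intros)
  moreover have "mu0 (cscale c v) = cscale (cnj c) (mu0 v)" for c v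
    by (simp add: mu0_def cscale_def split: prod.splits)
  ultimately have "antiholomorphic mu0"
    unfolding antiholomorphic_def by blast
  moreover have "mu0 (mu0 p) = p" for p
    by (metis mu0_mu0 comp_apply id_apply)
  moreover have "mu0 (act t p) = act (sigma t) (mu0 p)" for t p
    by (simp add: mu0_def act_def sigma_def power_inverse split: prod.splits)
  ultimately show ?thesis
    unfolding real_circle_form_def by blast
qed

(* The off-diagonal factors a^4 and b^4 carry the weights that make these maps equivariant. *)
definition matrix_map :: "complex poly \<Rightarrow> complex poly \<Rightarrow> complex poly \<Rightarrow> complex poly \<Rightarrow> Y \<Rightarrow> Y" where
  "matrix_map P Q R S p = (case p of (a,b,x,y) \<Rightarrow>
     (a, b, poly P (a*b) * x + a^4 * poly Q (a*b) * y, b^4 * poly R (a*b) * x + poly S (a*b) * y))"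

lemma equivariant_matrix_map: "equivariant (matrix_map P Q R S)"
  unfolding equivariant_def
proof (intro allI impI)
  fix t :: complex and p :: Y
  assume t: "t \<noteq> 0"
  then have "t * a * (inverse t * b) = a * b" for a b by (simp add: field_simps)
  with t show "matrix_map P Q R S (act t p) = act t (matrix_map P Q R S p)"
    by (simp add: matrix_map_def act_def field_simps power2_eq_square power4_eq_xxxx split: prod.splits)
qed

lemma poly_fun_poly:
  assumes "poly_fun f"
  shows "poly_fun (\<lambda>z. poly P (f z))"
  by (induction P) (auto intro!: poly_fun.intros assms)

lemma poly_map_matrix_map: "poly_map (matrix_map P Q R S)"
proof -
  have a: "poly_fun (\<lambda>p. fst p)" and b: "poly_fun (\<lambda>p. fst (snd p))"
    and x: "poly_fun (\<lambda>p. fst (snd (snd p)))" and y: "poly_fun (\<lambda>p. snd (snd (snd p)))"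
    using poly_fun.proj1 poly_fun.proj2 poly_fun.proj3 poly_fun.proj4
    by (simp_all only: split_def)
  have "poly_fun (\<lambda>p. f p ^ n)" if "poly_fun f" for f :: "Y \<Rightarrow> complex" and n
    by (induction n) (auto intro: poly_fun.intros that)
  with a b have "poly_fun (\<lambda>p. fst p ^ 4)" "poly_fun (\<lambda>p. fst (snd p) ^ 4)"
    and "poly_fun (\<lambda>p. poly T (fst p * fst (snd p)))" for T
    by (auto intro!: poly_fun_poly poly_fun.mult)
  with a b x y show ?thesis
    unfolding poly_map_def matrix_map_def
    by (simp add: case_prod_beta) (intro conjI poly_fun.intros; assumption?)+
qed

lemma matrix_map_comp:
  "matrix_map P Q R S \<circ> matrix_map P' Q' R' S' =
   matrix_map (P * P' + monom 1 4 * Q * R') (P * Q' + Q * S')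
              (R * P' + S * R') (monom 1 4 * R * Q' + S * S')"
  by (auto simp: matrix_map_def poly_monom algebra_simps power_mult_distrib)

lemma matrix_map_one: "matrix_map 1 0 0 1 = id"
  by (auto simp: matrix_map_def)

lemma
  assumes "P * S - monom 1 4 * Q * R = 1"
  shows bij_matrix_map: "bij (matrix_map P Q R S)"
    and inv_matrix_map: "inv (matrix_map P Q R S) = matrix_map S (- Q) (- R) P"
proof -
  have "matrix_map P Q R S \<circ> matrix_map S (- Q) (- R) P = id"
       "matrix_map S (- Q) (- R) P \<circ> matrix_map P Q R S = id"
    using assms by (simp_all add: matrix_map_comp algebra_simps flip: matrix_map_one)
  then show "bij (matrix_map P Q R S)" "inv (matrix_map P Q R S) = matrix_map S (- Q) (- R) P"
    by (auto simp: o_bij inv_unique_comp)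
qed

lemma regular_aut_matrix_map:
  assumes "P * S - monom 1 4 * Q * R = 1"
  shows "regular_aut (matrix_map P Q R S)"
  using assms by (simp add: regular_aut_def bij_matrix_map inv_matrix_map poly_map_matrix_map)

lemma mu0_matrix_map_mu0:
  "mu0 \<circ> matrix_map P Q R S \<circ> mu0 =
   matrix_map (map_poly cnj S) (map_poly cnj R) (map_poly cnj Q) (map_poly cnj P)"
  by (auto simp: fun_eq_iff matrix_map_def mu0_def mult.commute)

lemma phi_eq_matrix_map: "phi = matrix_map [:1, -1:] 1 (-1) [:1, 1, 1, 1:]"
  by (auto simp: fun_eq_iff phi_def matrix_map_def algebra_simps power2_eq_square power3_eq_cube)

definition psi11 :: "complex poly" where "psi11 = [:1, (-1 + \<i>) / 2, - (1 + \<i>) / 4:]"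
definition psi12 :: "complex poly" where "psi12 = [:(1 - \<i>) / 4:]"
definition psi21 :: "complex poly" where "psi21 = [:(-3 + \<i>) / 4, - (1 + \<i>) / 4:]"
definition psi22 :: "complex poly" where "psi22 = [:1, (1 - \<i>) / 2, (1 - \<i>) / 4, (1 - \<i>) / 4:]"

definition psi :: "Y \<Rightarrow> Y" where "psi = matrix_map psi11 psi12 psi21 psi22"

lemma psi_det: "psi11 * psi22 - monom 1 4 * psi12 * psi21 = 1"
  unfolding poly_eq_poly_eq_iff[symmetric]
  by (simp add: fun_eq_iff psi11_def psi12_def psi21_def psi22_def poly_monom field_simps
      power2_eq_square power3_eq_cube power4_eq_xxxx)

lemma phi_mu0_psi_mu0: "phi \<circ> (mu0 \<circ> psi \<circ> mu0) = psi"
  unfolding phi_eq_matrix_map psi_def mu0_matrix_map_mu0 matrix_map_comp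
  by (simp add: fun_eq_iff matrix_map_def psi11_def psi12_def psi21_def psi22_def poly_monom
      field_simps power2_eq_square power3_eq_cube power4_eq_xxxx)

theorem proposition6p1:
  shows "real_circle_form (phi \<circ> mu0) \<and> equivalent_forms mu0 (phi \<circ> mu0)"
proof -
  have psi: "regular_aut psi" "equivariant psi"
    unfolding psi_def using psi_det by (simp_all add: regular_aut_matrix_map equivariant_matrix_map)
  have "psi \<circ> mu0 \<circ> inv psi = phi \<circ> mu0 \<circ> psi \<circ> (mu0 \<circ> mu0) \<circ> inv psi"
    by (metis phi_mu0_psi_mu0 comp_assoc)
  also have "\<dots> = phi \<circ> mu0"
    using psi(1) unfolding regular_aut_def by (metis mu0_mu0 bij_is_surj surj_iff comp_assoc comp_id)
  finally have "equivalent_forms mu0 (phi \<circ> mu0)"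
    unfolding equivalent_forms_def using psi by metis
  then show ?thesis
    using real_circle_form_equivalent real_circle_form_mu0 by blast
qed

end
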